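(* For every finite $\sigma$-structure $\mathscr{A}$, $\mathsf{td}(\mathscr{A})=\kappa^{\mathbb{E}}(\mathscr{A})$.
   Context: $\mathbb{E}_k\mathscr{A}$ ($k\ge1$): universe $A^{\le k}$ (non-empty sequences of length $\le k$); $R(s_1,\dots,s_n)$ iff the $s_i$ are pairwise prefix-comparable and $R^{\mathscr{A}}$ holds of their last elements; $\varepsilon[a_1,\dots,a_j]=a_j$; $\delta[a_1,\dots,a_j]=[[a_1],[a_1,a_2],\dots,[a_1,\dots,a_j]]$; $\mathbb{E}_k h[a_1,\dots,a_j]=[h(a_1),\dots,h(a_j)]$. An $\mathbb{E}_k$-coalgebra on $\mathscr{A}$ is a homomorphism $\alpha:\mathscr{A}\to\mathbb{E}_k\mathscr{A}$ with $\delta\circ\alpha=\mathbb{E}_k\alpha\circ\alpha$ and $\varepsilon\circ\alpha=\mathrm{id}$. $\kappa^{\mathbb{E}}(\mathscr{A})$ is the least $k$ such that an $\mathbb{E}_k$-coalgebra on $\mathscr{A}$ exists. Gaifman graph $\mathcal{G}(\mathscr{A})=(A,\frown)$: $a\frown a'$ iff $a\ne a'$ and both occur in a common tuple of some $R^{\mathscr{A}}$. Forest: poset where predecessors of each element form a finite chain; height = max chain size. Forest cover of $(V,\frown)$: forest order on $V$ in which adjacent vertices are comparable. $\mathsf{td}(\mathscr{A})$ is the minimum height of a forest cover of $\mathcal{G}(\mathscr{A})$. *)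

theory Defs
  imports Main "HOL-Library.Sublist"
begin

text \<open>A relational sigma-structure is given by a universe A :: 'a set and an
interpretation R :: 'r => 'a list => bool of the relation symbols (of type 'r),
with arity function ar :: 'r => nat.\<close>

definition wf_structure :: "'a set \<Rightarrow> ('r \<Rightarrow> nat) \<Rightarrow> ('r \<Rightarrow> 'a list \<Rightarrow> bool) \<Rightarrow> bool" where
  "wf_structure A ar R \<longleftrightarrow> (\<forall>r t. R r t \<longrightarrow> length t = ar r \<and> set t \<subseteq> A)"

definition Ek_univ :: "nat \<Rightarrow> 'a set \<Rightarrow> 'a list set" where
  "Ek_univ k A = {s. s \<noteq> [] \<and> length s \<le> k \<and> set s \<subseteq> A}"

definition Ek_rel :: "('r \<Rightarrow> 'a list \<Rightarrow> bool) \<Rightarrow> 'r \<Rightarrow> 'a list list \<Rightarrow> bool" where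
  "Ek_rel R r ss \<longleftrightarrow>
     (\<forall>s\<in>set ss. \<forall>s'\<in>set ss. prefix s s' \<or> prefix s' s) \<and> R r (map last ss)"

definition Ek_counit :: "'a list \<Rightarrow> 'a" where
  "Ek_counit s = last s"

definition Ek_comult :: "'a list \<Rightarrow> 'a list list" where
  "Ek_comult s = map (\<lambda>i. take i s) [1..<Suc (length s)]"

definition Ek_map :: "('a \<Rightarrow> 'b) \<Rightarrow> 'a list \<Rightarrow> 'b list" where
  "Ek_map h s = map h s"

definition Ek_hom :: "nat \<Rightarrow> 'a set \<Rightarrow> ('r \<Rightarrow> 'a list \<Rightarrow> bool) \<Rightarrow> ('a \<Rightarrow> 'a list) \<Rightarrow> bool" where
  "Ek_hom k A R \<alpha> \<longleftrightarrow>
     (\<forall>a\<in>A. \<alpha> a \<in> Ek_univ k A) \<and> (\<forall>r t. R r t \<longrightarrow> Ek_rel R r (map \<alpha> t))"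

definition Ek_coalgebra :: "nat \<Rightarrow> 'a set \<Rightarrow> ('r \<Rightarrow> 'a list \<Rightarrow> bool) \<Rightarrow> ('a \<Rightarrow> 'a list) \<Rightarrow> bool" where
  "Ek_coalgebra k A R \<alpha> \<longleftrightarrow>
     Ek_hom k A R \<alpha> \<and>
     (\<forall>a\<in>A. Ek_comult (\<alpha> a) = Ek_map \<alpha> (\<alpha> a)) \<and>
     (\<forall>a\<in>A. Ek_counit (\<alpha> a) = a)"

definition kappaE :: "'a set \<Rightarrow> ('r \<Rightarrow> 'a list \<Rightarrow> bool) \<Rightarrow> nat" where
  "kappaE A R = (LEAST k. 1 \<le> k \<and> (\<exists>\<alpha>. Ek_coalgebra k A R \<alpha>))"

definition gaifman_adj :: "('r \<Rightarrow> 'a list \<Rightarrow> bool) \<Rightarrow> 'a \<Rightarrow> 'a \<Rightarrow> bool" where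
  "gaifman_adj R a a' \<longleftrightarrow> a \<noteq> a' \<and> (\<exists>r t. R r t \<and> a \<in> set t \<and> a' \<in> set t)"

definition forest_order :: "'a set \<Rightarrow> ('a \<Rightarrow> 'a \<Rightarrow> bool) \<Rightarrow> bool" where
  "forest_order V le \<longleftrightarrow>
     (\<forall>x\<in>V. le x x) \<and>
     (\<forall>x\<in>V. \<forall>y\<in>V. le x y \<and> le y x \<longrightarrow> x = y) \<and>
     (\<forall>x\<in>V. \<forall>y\<in>V. \<forall>z\<in>V. le x y \<and> le y z \<longrightarrow> le x z) \<and>
     (\<forall>x\<in>V. finite {y\<in>V. le y x} \<and>
        (\<forall>y\<in>V. \<forall>z\<in>V. le y x \<and> le z x \<longrightarrow> le y z \<or> le z y))"

definition is_chain_in :: "'a set \<Rightarrow> ('a \<Rightarrow> 'a \<Rightarrow> bool) \<Rightarrow> 'a set \<Rightarrow> bool" where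
  "is_chain_in V le C \<longleftrightarrow> C \<subseteq> V \<and> (\<forall>x\<in>C. \<forall>y\<in>C. le x y \<or> le y x)"

definition forest_height :: "'a set \<Rightarrow> ('a \<Rightarrow> 'a \<Rightarrow> bool) \<Rightarrow> nat" where
  "forest_height V le = Max (card ` {C. is_chain_in V le C})"

definition forest_cover :: "'a set \<Rightarrow> ('a \<Rightarrow> 'a \<Rightarrow> bool) \<Rightarrow> ('a \<Rightarrow> 'a \<Rightarrow> bool) \<Rightarrow> bool" where
  "forest_cover V adj le \<longleftrightarrow>
     forest_order V le \<and> (\<forall>x\<in>V. \<forall>y\<in>V. adj x y \<longrightarrow> le x y \<or> le y x)"

definition td :: "'a set \<Rightarrow> ('r \<Rightarrow> 'a list \<Rightarrow> bool) \<Rightarrow> nat" where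
  "td A R = (LEAST h. \<exists>le. forest_cover A (gaifman_adj R) le \<and> forest_height A le = h)"

end

theory Submission
  imports Defs
begin

text \<open>A forest cover of the Gaifman graph and an \<open>E\<^sub>k\<close>-coalgebra are two presentations of
the same data. Given a forest order, send each element to the chain of its ancestors, listed
from the root down: adjacent elements are comparable, so their chains are prefix-comparable;
the chains have length at most the height; and the prefixes of the chain of \<open>a\<close> are the
chains of the ancestors of \<open>a\<close>, which is the coalgebra law. Conversely, a coalgebra \<open>\<alpha>\<close> makes
\<open>x \<le> y \<longleftrightarrow> prefix (\<alpha> x) (\<alpha> y)\<close> a forest cover in which a chain is
determined by the lengths of its images, so its height is at most \<open>k\<close>.\<close>

lemma sorted_wrt_distinct_set_unique:
  assumes "sorted_wrt le xs" "sorted_wrt le ys" "distinct xs" "distinct ys" "set xs = set ys"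
    and antisym: "\<forall>x\<in>set xs. \<forall>y\<in>set xs. le x y \<and> le y x \<longrightarrow> x = y"
  shows "xs = ys"
  using assms
proof (induction xs arbitrary: ys)
  case Nil
  then show ?case by simp
next
  case (Cons x xs)
  then obtain y ys' where ys: "ys = y # ys'" by (cases ys) auto
  have "x = y"
  proof (rule ccontr)
    assume "x \<noteq> y"
    then have "y \<in> set xs" "le y x" "le x y" using Cons.prems ys by auto
    then show False using Cons.prems(6) \<open>x \<noteq> y\<close> by auto
  qed
  moreover have "set xs = set ys'" using Cons.prems ys \<open>x = y\<close> by auto
  ultimately show ?case using Cons ys by auto
qed

lemma sorted_wrt_sort_key:
  assumes "\<forall>x\<in>set xs. \<forall>y\<in>set xs. f x \<le> f y \<longrightarrow> le x y"
  shows "sorted_wrt le (sort_key f xs)"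
proof -
  have "sorted_wrt (\<lambda>x y. f x \<le> f y) (sort_key f xs)"
    using sorted_sort_key[of f xs] by (simp add: sorted_wrt_map)
  then show ?thesis by (rule sorted_wrt_mono_rel[rotated]) (use assms in auto)
qed

lemma sorted_wrt_nth_le_iff:
  assumes "sorted_wrt le xs" "distinct xs"
    and refl: "\<forall>x\<in>set xs. le x x"
    and antisym: "\<forall>x\<in>set xs. \<forall>y\<in>set xs. le x y \<and> le y x \<longrightarrow> x = y"
    and "i < length xs" "j < length xs"
  shows "le (xs ! j) (xs ! i) \<longleftrightarrow> j \<le> i"
proof
  assume "le (xs ! j) (xs ! i)"
  show "j \<le> i"
  proof (rule ccontr)
    assume "\<not> j \<le> i"
    then have "le (xs ! i) (xs ! j)" using assms(1,6) by (simp add: sorted_wrt_nth_less)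
    then have "xs ! i = xs ! j" using antisym \<open>le (xs ! j) (xs ! i)\<close> assms(5,6) by auto
    then show False using \<open>\<not> j \<le> i\<close> assms(2,5,6) by (simp add: nth_eq_iff_index_eq)
  qed
next
  assume "j \<le> i"
  then show "le (xs ! j) (xs ! i)"
    using assms(1,5) refl by (cases "j = i") (auto simp: sorted_wrt_nth_less)
qed

lemma set_take_Suc_sorted_wrt:
  assumes "sorted_wrt le xs" "distinct xs"
    and "\<forall>x\<in>set xs. le x x"
    and "\<forall>x\<in>set xs. \<forall>y\<in>set xs. le x y \<and> le y x \<longrightarrow> x = y"
    and i: "i < length xs"
  shows "set (take (Suc i) xs) = {x \<in> set xs. le x (xs ! i)}"
proof -
  have "set (take (Suc i) xs) = {xs ! j | j. j < length xs \<and> j \<le> i}"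
    using i unfolding set_conv_nth
    by (auto simp: less_Suc_eq_le) (metis le_imp_less_Suc nth_take)
  also have "\<dots> = {xs ! j | j. j < length xs \<and> le (xs ! j) (xs ! i)}"
    using sorted_wrt_nth_le_iff[OF assms(1-4) i] by blast
  also have "\<dots> = {x \<in> set xs. le x (xs ! i)}"
    by (auto simp: in_set_conv_nth)
  finally show ?thesis .
qed

definition ancestors :: "'a set \<Rightarrow> ('a \<Rightarrow> 'a \<Rightarrow> bool) \<Rightarrow> 'a \<Rightarrow> 'a set" where
  "ancestors V le a = {y \<in> V. le y a}"

definition depth :: "'a set \<Rightarrow> ('a \<Rightarrow> 'a \<Rightarrow> bool) \<Rightarrow> 'a \<Rightarrow> nat" where
  "depth V le a = card (ancestors V le a)"

definition ancestor_list :: "'a set \<Rightarrow> ('a \<Rightarrow> 'a \<Rightarrow> bool) \<Rightarrow> 'a \<Rightarrow> 'a list" where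
  "ancestor_list V le a =
     sort_key (depth V le) (SOME xs. set xs = ancestors V le a \<and> distinct xs)"

context
  fixes V :: "'a set" and le :: "'a \<Rightarrow> 'a \<Rightarrow> bool"
  assumes forest: "forest_order V le" and finite: "finite V"
begin

lemma forest_refl: "x \<in> V \<Longrightarrow> le x x"
  using forest unfolding forest_order_def by blast

lemma forest_antisym: "x \<in> V \<Longrightarrow> y \<in> V \<Longrightarrow> le x y \<Longrightarrow> le y x \<Longrightarrow> x = y"
  using forest unfolding forest_order_def by blast

lemma forest_trans: "x \<in> V \<Longrightarrow> y \<in> V \<Longrightarrow> z \<in> V \<Longrightarrow> le x y \<Longrightarrow> le y z \<Longrightarrow> le x z"
  using forest unfolding forest_order_def by blast

lemma ancestors_comparable:
  "a \<in> V \<Longrightarrow> x \<in> ancestors V le a \<Longrightarrow> y \<in> ancestors V le a \<Longrightarrow> le x y \<or> le y x"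
  using forest unfolding forest_order_def ancestors_def by blast

lemma depth_less:
  assumes "x \<in> V" "y \<in> V" "le x y" "x \<noteq> y"
  shows "depth V le x < depth V le y"
proof -
  have "ancestors V le x \<subset> ancestors V le y"
    using assms forest_trans forest_refl forest_antisym unfolding ancestors_def by blast
  then show ?thesis unfolding depth_def
    using finite by (simp add: ancestors_def psubset_card_mono)
qed

lemma ancestor_list:
  assumes "a \<in> V"
  shows "set (ancestor_list V le a) = ancestors V le a"
    and "distinct (ancestor_list V le a)"
    and "sorted_wrt le (ancestor_list V le a)"
proof -
  have "\<exists>xs. set xs = ancestors V le a \<and> distinct xs"
    using finite finite_distinct_list[of "ancestors V le a"] by (simp add: ancestors_def)
  then have some: "set (SOME xs. set xs = ancestors V le a \<and> distinct xs) = ancestors V le a"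
    "distinct (SOME xs. set xs = ancestors V le a \<and> distinct xs)"
    by (metis (mono_tags, lifting) someI_ex)+
  then show "set (ancestor_list V le a) = ancestors V le a"
    and "distinct (ancestor_list V le a)"
    unfolding ancestor_list_def by simp_all
  have "le x y" if "x \<in> ancestors V le a" "y \<in> ancestors V le a"
    "depth V le x \<le> depth V le y" for x y
    using that ancestors_comparable[OF assms] depth_less
    by (metis (no_types, lifting) ancestors_def mem_Collect_eq not_le)
  then show "sorted_wrt le (ancestor_list V le a)"
    unfolding ancestor_list_def by (intro sorted_wrt_sort_key) (simp add: some(1))
qed


lemma ancestor_list_refl_antisym:
  assumes "a \<in> V"
  shows "\<forall>x\<in>set (ancestor_list V le a). le x x"
    and "\<forall>x\<in>set (ancestor_list V le a). \<forall>y\<in>set (ancestor_list V le a).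
           le x y \<and> le y x \<longrightarrow> x = y"
  using ancestor_list(1)[OF assms] forest_refl forest_antisym by (auto simp: ancestors_def)

lemma ancestor_list_unique:
  assumes "a \<in> V" "sorted_wrt le xs" "distinct xs" "set xs = ancestors V le a"
  shows "xs = ancestor_list V le a"
  using assms ancestor_list[OF \<open>a \<in> V\<close>] ancestor_list_refl_antisym(2)[OF \<open>a \<in> V\<close>]
  by (intro sorted_wrt_distinct_set_unique[where le = le]) simp_all

lemma take_ancestor_list:
  assumes a: "a \<in> V" and i: "i < length (ancestor_list V le a)"
  shows "take (Suc i) (ancestor_list V le a) = ancestor_list V le (ancestor_list V le a ! i)"
proof -
  let ?xs = "ancestor_list V le a" and ?y = "ancestor_list V le a ! i"
  have y: "?y \<in> ancestors V le a"
    using ancestor_list(1)[OF a] i nth_mem by blast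
  then have "?y \<in> V" by (simp add: ancestors_def)
  have "set (take (Suc i) ?xs) = {x \<in> ancestors V le a. le x ?y}"
    using set_take_Suc_sorted_wrt[OF ancestor_list(3,2)[OF a] ancestor_list_refl_antisym[OF a] i]
    by (simp add: ancestor_list(1)[OF a])
  also have "\<dots> = ancestors V le ?y"
    using y a forest_trans unfolding ancestors_def by blast
  finally show ?thesis
    using ancestor_list(2,3)[OF a]
    by (intro ancestor_list_unique[OF \<open>?y \<in> V\<close>]) (simp_all add: sorted_wrt_take)
qed

lemma last_ancestor_list:
  assumes a: "a \<in> V"
  shows "ancestor_list V le a \<noteq> []" and "last (ancestor_list V le a) = a"
proof -
  let ?xs = "ancestor_list V le a"
  have "a \<in> set ?xs"
    using a forest_refl ancestor_list(1)[OF a] by (simp add: ancestors_def)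
  then show ne: "?xs \<noteq> []" by auto
  then have last: "last ?xs = ?xs ! (length ?xs - 1)" "length ?xs - 1 < length ?xs"
    by (simp_all add: last_conv_nth)
  have "set ?xs = {x \<in> set ?xs. le x (last ?xs)}"
    using set_take_Suc_sorted_wrt[OF ancestor_list(3,2)[OF a] ancestor_list_refl_antisym[OF a] last(2)]
      last ne by simp
  then have "le a (last ?xs)"
    using \<open>a \<in> set ?xs\<close> by blast
  moreover have "last ?xs \<in> ancestors V le a"
    using ne ancestor_list(1)[OF a] last_in_set by blast
  ultimately show "last ?xs = a"
    using a forest_antisym by (simp add: ancestors_def)
qed

lemma prefix_ancestor_list:
  assumes "x \<in> V" "y \<in> V" "le x y"
  shows "prefix (ancestor_list V le x) (ancestor_list V le y)"
proof -
  have "x \<in> set (ancestor_list V le y)"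
    using assms ancestor_list(1) by (simp add: ancestors_def)
  then obtain i where i: "i < length (ancestor_list V le y)" "ancestor_list V le y ! i = x"
    by (auto simp: in_set_conv_nth)
  then show ?thesis
    using take_ancestor_list[OF \<open>y \<in> V\<close> i(1)] by (metis take_is_prefix)
qed

end

lemma finite_chains: "finite V \<Longrightarrow> finite {C. is_chain_in V le C}"
  by (rule finite_subset[of _ "Pow V"]) (auto simp: is_chain_in_def)

lemma card_chain_le_forest_height:
  "finite V \<Longrightarrow> is_chain_in V le C \<Longrightarrow> card C \<le> forest_height V le"
  unfolding forest_height_def by (auto intro: Max_ge finite_chains)

lemma forest_height_le:
  assumes "finite V" "\<And>C. is_chain_in V le C \<Longrightarrow> card C \<le> k"
  shows "forest_height V le \<le> k"
proof -
  have "{} \<in> {C. is_chain_in V le C}" by (simp add: is_chain_in_def)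
  then show ?thesis
    unfolding forest_height_def using assms finite_chains by (subst Max_le_iff) auto
qed

lemma forest_height_pos:
  assumes "finite V" "V \<noteq> {}" "forest_order V le"
  shows "1 \<le> forest_height V le"
proof -
  obtain a where "a \<in> V" using assms(2) by blast
  then have "is_chain_in V le {a}"
    using assms(3) unfolding is_chain_in_def forest_order_def by auto
  then show ?thesis using card_chain_le_forest_height[OF assms(1)] by fastforce
qed

lemma length_ancestor_list_le_forest_height:
  assumes "forest_order V le" "finite V" "a \<in> V"
  shows "length (ancestor_list V le a) \<le> forest_height V le"
proof -
  have "is_chain_in V le (ancestors V le a)"
    using ancestors_comparable[OF assms] unfolding is_chain_in_def ancestors_def by blast
  then show ?thesis
    using card_chain_le_forest_height[OF assms(2)] ancestor_list(1,2)[OF assms]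
    by (metis distinct_card)
qed

lemma Ek_coalgebra_ancestor_list:
  assumes wf: "wf_structure A ar R" and finite: "finite A"
    and cover: "forest_cover A (gaifman_adj R) le"
  shows "Ek_coalgebra (forest_height A le) A R (ancestor_list A le)"
proof -
  have forest: "forest_order A le" using cover unfolding forest_cover_def by simp
  note last = last_ancestor_list[OF forest finite]
  have rel: "Ek_rel R r (map (ancestor_list A le) t)" if "R r t" for r t
  proof -
    have t: "set t \<subseteq> A" using wf \<open>R r t\<close> unfolding wf_structure_def by blast
    have "le x y \<or> le y x" if "x \<in> set t" "y \<in> set t" for x y
      using forest_refl[OF forest finite] cover \<open>R r t\<close> t that
      unfolding forest_cover_def gaifman_adj_def by (cases "x = y") blast+
    then have "prefix (ancestor_list A le x) (ancestor_list A le y) \<or>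
        prefix (ancestor_list A le y) (ancestor_list A le x)" if "x \<in> set t" "y \<in> set t" for x y
      using prefix_ancestor_list[OF forest finite] t that by blast
    moreover have "map last (map (ancestor_list A le) t) = t"
      using last(2) t by (induction t) auto
    ultimately show ?thesis unfolding Ek_rel_def using \<open>R r t\<close> by auto
  qed
  have comult: "Ek_comult (ancestor_list A le a) = Ek_map (ancestor_list A le) (ancestor_list A le a)"
    if "a \<in> A" for a
    unfolding Ek_comult_def Ek_map_def
    by (rule nth_equalityI)
      (simp_all add: nth_upt take_ancestor_list[OF forest finite \<open>a \<in> A\<close>] del: upt_Suc)
  have "ancestor_list A le a \<in> Ek_univ (forest_height A le) A" if "a \<in> A" for a
    using that length_ancestor_list_le_forest_height[OF forest finite] last(1)
      ancestor_list(1)[OF forest finite] unfolding Ek_univ_def ancestors_def by auto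
  then show ?thesis unfolding Ek_coalgebra_def Ek_hom_def Ek_counit_def
    using rel comult last(2) by blast
qed

lemma forest_cover_prefix_Ek_coalgebra:
  assumes finite: "finite A" and coalg: "Ek_coalgebra k A R \<alpha>"
  shows "forest_cover A (gaifman_adj R) (\<lambda>x y. prefix (\<alpha> x) (\<alpha> y))"
proof -
  have rel: "\<And>r t. R r t \<Longrightarrow> Ek_rel R r (map \<alpha> t)"
    and last: "\<And>a. a \<in> A \<Longrightarrow> last (\<alpha> a) = a"
    using coalg unfolding Ek_coalgebra_def Ek_hom_def Ek_counit_def by auto
  have inj: "x = y" if "x \<in> A" "y \<in> A" "\<alpha> x = \<alpha> y" for x y
    using last that by metis
  have "forest_order A (\<lambda>x y. prefix (\<alpha> x) (\<alpha> y))"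
    unfolding forest_order_def using finite inj
    by (auto intro: prefix_order.antisym dest: prefix_same_cases)
  moreover have "prefix (\<alpha> x) (\<alpha> y) \<or> prefix (\<alpha> y) (\<alpha> x)" if "gaifman_adj R x y" for x y
    using that rel unfolding gaifman_adj_def Ek_rel_def by fastforce
  ultimately show ?thesis unfolding forest_cover_def by blast
qed

lemma forest_height_prefix_Ek_coalgebra:
  assumes finite: "finite A" and coalg: "Ek_coalgebra k A R \<alpha>"
  shows "forest_height A (\<lambda>x y. prefix (\<alpha> x) (\<alpha> y)) \<le> k"
proof (rule forest_height_le[OF finite])
  have univ: "\<And>a. a \<in> A \<Longrightarrow> \<alpha> a \<in> Ek_univ k A"
    and last: "\<And>a. a \<in> A \<Longrightarrow> last (\<alpha> a) = a"
    using coalg unfolding Ek_coalgebra_def Ek_hom_def Ek_counit_def by auto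
  fix C assume chain: "is_chain_in A (\<lambda>x y. prefix (\<alpha> x) (\<alpha> y)) C"
  then have "C \<subseteq> A" unfolding is_chain_in_def by simp
  have "inj_on (\<lambda>c. length (\<alpha> c)) C"
  proof (rule inj_onI)
    fix x y assume "x \<in> C" "y \<in> C" "length (\<alpha> x) = length (\<alpha> y)"
    then have "\<alpha> x = \<alpha> y"
      using chain unfolding is_chain_in_def
      by (metis prefix_length_le prefix_length_prefix prefix_order.antisym)
    then show "x = y" using last \<open>x \<in> C\<close> \<open>y \<in> C\<close> \<open>C \<subseteq> A\<close> by (metis subsetD)
  qed
  moreover have "(\<lambda>c. length (\<alpha> c)) ` C \<subseteq> {1..k}"
    using univ \<open>C \<subseteq> A\<close> unfolding Ek_univ_def by (auto simp: Suc_le_eq)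
  ultimately show "card C \<le> k"
    using card_inj_on_le[of _ C "{1..k}"] by fastforce
qed

lemma exists_forest_cover:
  assumes "finite V"
  shows "\<exists>le. forest_cover V adj le"
proof -
  obtain f :: "'a \<Rightarrow> nat" where "inj_on f V"
    using finite_imp_inj_to_nat_seg[OF assms] by blast
  then have "forest_cover V adj (\<lambda>x y. f x \<le> f y)"
    unfolding forest_cover_def forest_order_def using assms by (auto dest: inj_onD)
  then show ?thesis by blast
qed

lemma td_attained:
  assumes "finite A"
  obtains le where "forest_cover A (gaifman_adj R) le" "forest_height A le = td A R"
proof -
  have "\<exists>h le. forest_cover A (gaifman_adj R) le \<and> forest_height A le = h"
    using exists_forest_cover[OF assms] by blast
  from LeastI_ex[OF this] show thesis using that unfolding td_def by blast
qed

lemma td_le_forest_height: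
  "forest_cover A (gaifman_adj R) le \<Longrightarrow> td A R \<le> forest_height A le"
  unfolding td_def by (intro Least_le) blast

lemma Ek_coalgebra_of_height_td:
  assumes wf: "wf_structure A ar R" and "finite A" "A \<noteq> {}"
  shows "1 \<le> td A R" and "\<exists>\<alpha>. Ek_coalgebra (td A R) A R \<alpha>"
proof -
  obtain le where cover: "forest_cover A (gaifman_adj R) le" and td: "forest_height A le = td A R"
    using td_attained[OF \<open>finite A\<close>] .
  have forest: "forest_order A le" using cover unfolding forest_cover_def by simp
  show "1 \<le> td A R"
    using forest_height_pos[OF \<open>finite A\<close> \<open>A \<noteq> {}\<close> forest] td by simp
  show "\<exists>\<alpha>. Ek_coalgebra (td A R) A R \<alpha>"
    using Ek_coalgebra_ancestor_list[OF wf \<open>finite A\<close> cover] td by auto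
qed

lemma kappaE_le_td:
  assumes "wf_structure A ar R" "finite A" "A \<noteq> {}"
  shows "kappaE A R \<le> td A R"
  unfolding kappaE_def using Ek_coalgebra_of_height_td[OF assms] by (intro Least_le) blast

lemma Ek_coalgebra_kappaE:
  assumes "wf_structure A ar R" "finite A" "A \<noteq> {}"
  obtains \<alpha> where "Ek_coalgebra (kappaE A R) A R \<alpha>"
proof -
  have "\<exists>k. 1 \<le> k \<and> (\<exists>\<alpha>. Ek_coalgebra k A R \<alpha>)"
    using Ek_coalgebra_of_height_td[OF assms] by blast
  from LeastI_ex[OF this] show thesis
    using that unfolding kappaE_def by blast
qed

lemma td_le_kappaE:
  assumes "wf_structure A ar R" "finite A" "A \<noteq> {}"
  shows "td A R \<le> kappaE A R"
proof -
  obtain \<alpha> where coalg: "Ek_coalgebra (kappaE A R) A R \<alpha>"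
    using Ek_coalgebra_kappaE[OF assms] .
  have "td A R \<le> forest_height A (\<lambda>x y. prefix (\<alpha> x) (\<alpha> y))"
    using forest_cover_prefix_Ek_coalgebra[OF \<open>finite A\<close> coalg] by (rule td_le_forest_height)
  also have "\<dots> \<le> kappaE A R"
    using forest_height_prefix_Ek_coalgebra[OF \<open>finite A\<close> coalg] .
  finally show ?thesis .
qed

theorem mainTheorem12:
  fixes A :: "'a set" and ar :: "'r \<Rightarrow> nat" and R :: "'r \<Rightarrow> 'a list \<Rightarrow> bool"
  assumes "wf_structure A ar R" and "finite A" and "A \<noteq> {}"
  shows "td A R = kappaE A R"
  using td_le_kappaE[OF assms] kappaE_le_td[OF assms] by (rule antisym)

end
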